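(* Let $p=p(n)\in(0,1)$ satisfy $p(n)\log n\to 0$ as $n\to\infty$, and let $G\sim D(n,p)$. Then with probability $1-o(1)$ the number of sources of $G$ is at most $5/p$.
   Context: $D(n,p)$ is the distribution on DAGs with vertex set $\{1,\dots,n\}$ assigning each DAG with $e$ edges probability proportional to $(p/(1-p))^e$. A source is a vertex with no incoming edges. *)

theory Defs
  imports Complex_Main
begin

text \<open>DAGs on vertex set {1..n}: edge sets of directed edges (u,v) meaning u -> v,
  contained in {1..n} x {1..n}, with no directed cycle (acyclic = irreflexive
  transitive closure, which also excludes loops).\<close>
definition dags :: "nat \<Rightarrow> (nat \<times> nat) set set" where
  "dags n = {E. E \<subseteq> {1..n} \<times> {1..n} \<and> acyclic E}"

definition sources :: "nat \<Rightarrow> (nat \<times> nat) set \<Rightarrow> nat set" where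
  "sources n E = {v \<in> {1..n}. \<forall>u. (u, v) \<notin> E}"

text \<open>Weight of a DAG under D(n,p).\<close>
definition dag_weight :: "real \<Rightarrow> (nat \<times> nat) set \<Rightarrow> real" where
  "dag_weight p E = (p / (1 - p)) ^ card E"

definition dag_prob :: "nat \<Rightarrow> real \<Rightarrow> ((nat \<times> nat) set \<Rightarrow> bool) \<Rightarrow> real" where
  "dag_prob n p P =
     (\<Sum>E\<in>{E \<in> dags n. P E}. dag_weight p E) / (\<Sum>E\<in>dags n. dag_weight p E)"

end

theory Submission
  imports Defs "HOL-Library.FuncSet"
begin

(* Weight a DAG E by q ^ |E| with q = p / (1 - p), and let A(V) and M(V) be the total weight
   and the weighted number of sources of the DAGs on V. A DAG with source set S is a DAG D on
   V - S together with edges from S that cover every source of D; for a = (1 + q) ^ |S| these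
   edges weigh a ^ (|V - S| - k) * (a - 1) ^ k in total, k the number of sources of D, which is
   decreasing in k. By Chebyshev's sum inequality, the vertices all of whose in-neighbours are
   sources ("second layer") thus have weighted count at most K * A(V) as soon as
   M(R) <= K * A(R) for all proper subsets R. Conversely, joining a nonempty set of other sources
   to a source t makes t a second-layer vertex, so a DAG with k sources contributes at least
   k * ((1 + q) ^ (k - 1) - 1) to that count. If (1 + q) ^ N >= 3, induction on V yields
   M(V) <= 2 N A(V), and then the weight of the DAGs with at least s > 2 N sources halves with
   each increment of s. Taking N about 5 / (4 p), more than 5 / p sources have probability at
   most p. *)

lemma acyclic_Un_from_sources:
  assumes "acyclic E" and no_in: "\<And>u v w. (u, v) \<in> F \<Longrightarrow> (w, u) \<notin> E \<union> F"
  shows "acyclic (E \<union> F)"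
proof -
  have path: "(x, y) \<in> E\<^sup>+ \<or> (\<exists>z. (x, z) \<in> F \<and> (z, y) \<in> E\<^sup>*)" if "(x, y) \<in> (E \<union> F)\<^sup>+" for x y
    using that
  proof (induction rule: trancl_induct)
    case (step y z)
    have "(y, z) \<in> E"
      using step.hyps(1,2) no_in by (metis UnE tranclE)
    with step.IH show ?case
      by (meson rtrancl.rtrancl_into_rtrancl trancl.trancl_into_trancl)
  qed blast
  show ?thesis
    unfolding acyclic_def
  proof (intro allI notI)
    fix x assume "(x, x) \<in> (E \<union> F)\<^sup>+"
    with path consider "(x, x) \<in> E\<^sup>+" | z where "(x, z) \<in> F" "(z, x) \<in> E\<^sup>*"
      by blast
    then show False
    proof cases
      case 1
      with assms(1) show False
        by (simp add: acyclic_def)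
    next
      case 2
      with no_in show False
        by (metis UnCI rtranclE)
    qed
  qed
qed

lemma sum_power_card_Pow:
  fixes q :: "'b::comm_semiring_1"
  assumes "finite A"
  shows "(\<Sum>X\<in>Pow A. q ^ card X) = (1 + q) ^ card A"
  using prod_add[OF assms, of "\<lambda>_. q" "\<lambda>_. 1"] by (simp add: add.commute)

lemma sum_power_card_Pow_nonempty:
  fixes q :: "'b::comm_ring_1"
  assumes "finite A"
  shows "(\<Sum>X\<in>Pow A - {{}}. q ^ card X) = (1 + q) ^ card A - 1"
  using assms by (simp add: sum_diff1 sum_power_card_Pow)

definition dags_on :: "'a set \<Rightarrow> ('a \<times> 'a) set set" where
  "dags_on V = {E. E \<subseteq> V \<times> V \<and> acyclic E}"

definition sources_on :: "'a set \<Rightarrow> ('a \<times> 'a) set \<Rightarrow> 'a set" where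
  "sources_on V E = {v \<in> V. \<forall>u. (u, v) \<notin> E}"

definition second_layer :: "'a set \<Rightarrow> ('a \<times> 'a) set \<Rightarrow> 'a set" where
  "second_layer V E = {v \<in> V - sources_on V E. \<forall>u. (u, v) \<in> E \<longrightarrow> u \<in> sources_on V E}"

lemma finite_dags_on: "finite V \<Longrightarrow> finite (dags_on V)"
  unfolding dags_on_def by (rule finite_subset[of _ "Pow (V \<times> V)"]) auto

lemma empty_in_dags_on: "{} \<in> dags_on V"
  by (simp add: dags_on_def acyclic_def)

definition covering_edges :: "'a set \<Rightarrow> 'a set \<Rightarrow> 'a set \<Rightarrow> ('a \<times> 'a) set set" where
  "covering_edges S R Z = {B. B \<subseteq> S \<times> R \<and> (\<forall>v\<in>Z. \<exists>u. (u, v) \<in> B)}"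

lemma finite_covering_edges: "finite S \<Longrightarrow> finite R \<Longrightarrow> finite (covering_edges S R Z)"
  unfolding covering_edges_def by (rule finite_subset[of _ "Pow (S \<times> R)"]) auto

lemma bij_betw_in_neighbourhoods_covering_edges:
  assumes "Z \<subseteq> R"
  shows "bij_betw (\<lambda>f. {(u, v). v \<in> R \<and> u \<in> f v})
           (PiE R (\<lambda>v. if v \<in> Z then Pow S - {{}} else Pow S)) (covering_edges S R Z)"
proof (rule bij_betw_byWitness[where f' = "\<lambda>B. \<lambda>v\<in>R. {u. (u, v) \<in> B}"])
  show "\<forall>f \<in> PiE R (\<lambda>v. if v \<in> Z then Pow S - {{}} else Pow S).
          (\<lambda>v\<in>R. {u. (u, v) \<in> {(u, v). v \<in> R \<and> u \<in> f v}}) = f"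
  proof (intro ballI ext)
    fix f v assume "f \<in> PiE R (\<lambda>v. if v \<in> Z then Pow S - {{}} else Pow S)"
    then show "(\<lambda>v\<in>R. {u. (u, v) \<in> {(u, v). v \<in> R \<and> u \<in> f v}}) v = f v"
      using PiE_arb[of f, of _ _ v] by simp
  qed
  show "\<forall>B \<in> covering_edges S R Z. {(u, v). v \<in> R \<and> u \<in> (\<lambda>v\<in>R. {u. (u, v) \<in> B}) v} = B"
    by (auto simp: covering_edges_def)
  show "(\<lambda>f. {(u, v). v \<in> R \<and> u \<in> f v}) ` PiE R (\<lambda>v. if v \<in> Z then Pow S - {{}} else Pow S)
      \<subseteq> covering_edges S R Z"
    using assms by (fastforce simp: covering_edges_def PiE_iff split: if_splits)
  show "(\<lambda>B. \<lambda>v\<in>R. {u. (u, v) \<in> B}) ` covering_edges S R Z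
      \<subseteq> PiE R (\<lambda>v. if v \<in> Z then Pow S - {{}} else Pow S)"
    using assms by (auto simp: covering_edges_def)
qed

lemma sum_covering_edges:
  fixes q :: real
  assumes S: "finite S" and R: "finite R" and Z: "Z \<subseteq> R"
  shows "(\<Sum>B\<in>covering_edges S R Z. q ^ card B)
           = ((1 + q) ^ card S) ^ (card R - card Z) * ((1 + q) ^ card S - 1) ^ card Z"
proof -
  define T where "T = (\<lambda>v. if v \<in> Z then Pow S - {{}} else Pow S)"
  have card_edges: "card {(u, v). v \<in> R \<and> u \<in> f v} = (\<Sum>v\<in>R. card (f v))" if f: "f \<in> PiE R T" for f
  proof -
    have "f v \<subseteq> S" if "v \<in> R" for v
      using PiE_mem[OF f that] by (auto simp: T_def split: if_splits)
    then have "\<forall>v\<in>R. finite (f v)"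
      using S finite_subset by blast
    moreover have "{(u, v). v \<in> R \<and> u \<in> f v} = prod.swap ` Sigma R f"
      by auto
    ultimately show ?thesis
      by (simp add: card_image R)
  qed
  have "(\<Sum>B\<in>covering_edges S R Z. q ^ card B) = (\<Sum>f\<in>PiE R T. q ^ card {(u, v). v \<in> R \<and> u \<in> f v})"
    using sum.reindex_bij_betw[OF bij_betw_in_neighbourhoods_covering_edges[OF Z], of "\<lambda>B. q ^ card B" S]
    by (simp add: T_def)
  also have "\<dots> = (\<Sum>f\<in>PiE R T. \<Prod>v\<in>R. q ^ card (f v))"
    by (rule sum.cong) (simp_all add: card_edges power_sum)
  also have "\<dots> = (\<Prod>v\<in>R. \<Sum>X\<in>T v. q ^ card X)"
    by (rule prod_sum_PiE[symmetric]) (auto simp: R S T_def)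
  also have "\<dots> = (\<Prod>v\<in>R. if v \<in> Z then (1 + q) ^ card S - 1 else (1 + q) ^ card S)"
    by (rule prod.cong) (simp_all add: T_def S sum_power_card_Pow sum_power_card_Pow_nonempty)
  also have "\<dots> = ((1 + q) ^ card S) ^ (card R - card Z) * ((1 + q) ^ card S - 1) ^ card Z"
    using Z R by (simp add: prod.If_cases Int_absorb1 Diff_eq[symmetric] card_Diff_subset finite_subset mult.commute)
  finally show ?thesis .
qed

lemma dag_Un_covering_edges:
  assumes S: "S \<subseteq> V" and D: "D \<in> dags_on (V - S)"
    and B: "B \<in> covering_edges S (V - S) (sources_on (V - S) D)"
  shows "D \<union> B \<in> dags_on V" "sources_on V (D \<union> B) = S"
    "second_layer V (D \<union> B) = sources_on (V - S) D"
proof -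
  have D_sub: "D \<subseteq> (V - S) \<times> (V - S)" and "acyclic D"
    using D by (auto simp: dags_on_def)
  have B_sub: "B \<subseteq> S \<times> (V - S)"
    and B_cover: "\<And>v. v \<in> sources_on (V - S) D \<Longrightarrow> \<exists>u. (u, v) \<in> B"
    using B by (auto simp: covering_edges_def)
  have "acyclic (D \<union> B)"
    by (rule acyclic_Un_from_sources[OF \<open>acyclic D\<close>]) (use D_sub B_sub in blast)
  then show "D \<union> B \<in> dags_on V"
    using D_sub B_sub S by (auto simp: dags_on_def)
  show sources: "sources_on V (D \<union> B) = S"
    using D_sub B_sub S B_cover by (auto simp: sources_on_def) blast
  show "second_layer V (D \<union> B) = sources_on (V - S) D"
    using D_sub B_sub unfolding second_layer_def sources by (auto simp: sources_on_def)
qed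

lemma dag_split_at_sources:
  assumes E: "E \<in> dags_on V" and S: "sources_on V E = S"
  shows "Restr E (V - S) \<in> dags_on (V - S)"
    "E \<inter> S \<times> (V - S) \<in> covering_edges S (V - S) (sources_on (V - S) (Restr E (V - S)))"
    "Restr E (V - S) \<union> E \<inter> S \<times> (V - S) = E"
proof -
  have E_sub: "E \<subseteq> V \<times> V" and "acyclic E"
    using E by (auto simp: dags_on_def)
  have no_edge_into_S: "v \<notin> S" if "(u, v) \<in> E" for u v
    using that S by (auto simp: sources_on_def)
  show "Restr E (V - S) \<in> dags_on (V - S)"
    using acyclic_subset[OF \<open>acyclic E\<close>] by (auto simp: dags_on_def)
  have "\<exists>u. (u, v) \<in> E \<inter> S \<times> (V - S)" if v: "v \<in> sources_on (V - S) (Restr E (V - S))" for v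
  proof -
    have "v \<in> V" "v \<notin> S"
      using v by (auto simp: sources_on_def)
    then obtain u where u: "(u, v) \<in> E"
      using S by (auto simp: sources_on_def)
    then have "u \<in> S"
      using v E_sub by (auto simp: sources_on_def)
    with u \<open>v \<notin> S\<close> \<open>v \<in> V\<close> show ?thesis
      by blast
  qed
  then show "E \<inter> S \<times> (V - S) \<in> covering_edges S (V - S) (sources_on (V - S) (Restr E (V - S)))"
    by (auto simp: covering_edges_def)
  show "Restr E (V - S) \<union> E \<inter> S \<times> (V - S) = E"
    using E_sub no_edge_into_S by auto
qed

lemma bij_betw_dags_with_sources:
  assumes "S \<subseteq> V"
  shows "bij_betw (\<lambda>(D, B). D \<union> B)
           (SIGMA D:dags_on (V - S). covering_edges S (V - S) (sources_on (V - S) D))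
           {E \<in> dags_on V. sources_on V E = S}"
proof (rule bij_betw_byWitness[where f' = "\<lambda>E. (Restr E (V - S), E \<inter> S \<times> (V - S))"])
  have "Restr (D \<union> B) (V - S) = D" "(D \<union> B) \<inter> S \<times> (V - S) = B"
    if "D \<in> dags_on (V - S)" "B \<in> covering_edges S (V - S) (sources_on (V - S) D)" for D B
    using that by (auto simp: dags_on_def covering_edges_def)
  then show "\<forall>DB \<in> SIGMA D:dags_on (V - S). covering_edges S (V - S) (sources_on (V - S) D).
          (\<lambda>E. (Restr E (V - S), E \<inter> S \<times> (V - S))) ((\<lambda>(D, B). D \<union> B) DB) = DB"
    by auto
  show "\<forall>E \<in> {E \<in> dags_on V. sources_on V E = S}.
          (\<lambda>(D, B). D \<union> B) (Restr E (V - S), E \<inter> S \<times> (V - S)) = E"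
    by (simp add: dag_split_at_sources(3))
  show "(\<lambda>(D, B). D \<union> B) ` (SIGMA D:dags_on (V - S). covering_edges S (V - S) (sources_on (V - S) D))
          \<subseteq> {E \<in> dags_on V. sources_on V E = S}"
    using dag_Un_covering_edges[OF assms] by auto
  show "(\<lambda>E. (Restr E (V - S), E \<inter> S \<times> (V - S))) ` {E \<in> dags_on V. sources_on V E = S}
      \<subseteq> (SIGMA D:dags_on (V - S). covering_edges S (V - S) (sources_on (V - S) D))"
    using dag_split_at_sources(1,2) by blast
qed

lemma sum_dags_with_sources:
  fixes q :: real and G :: "nat \<Rightarrow> real"
  assumes V: "finite V" and S: "S \<subseteq> V"
  shows "(\<Sum>E\<in>{E \<in> dags_on V. sources_on V E = S}. q ^ card E * G (card (second_layer V E)))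
       = (\<Sum>D\<in>dags_on (V - S). q ^ card D * G (card (sources_on (V - S) D))
            * (\<Sum>B\<in>covering_edges S (V - S) (sources_on (V - S) D). q ^ card B))"
proof -
  let ?R = "V - S"
  let ?C = "\<lambda>D. covering_edges S ?R (sources_on ?R D)"
  have weight: "q ^ card (D \<union> B) * G (card (second_layer V (D \<union> B)))
      = q ^ card D * G (card (sources_on ?R D)) * q ^ card B"
    if D: "D \<in> dags_on ?R" and B: "B \<in> ?C D" for D B
  proof -
    have sub: "D \<subseteq> ?R \<times> ?R" "B \<subseteq> S \<times> ?R"
      using D B by (auto simp: dags_on_def covering_edges_def)
    then have "D \<subseteq> V \<times> V" "B \<subseteq> V \<times> V"
      using S by auto
    then have "finite D" "finite B"
      using finite_cartesian_product[OF V V] by (auto intro: finite_subset)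
    then have "card (D \<union> B) = card D + card B"
      using sub by (intro card_Un_disjoint) auto
    then show ?thesis
      using dag_Un_covering_edges(3)[OF S D B] by (simp add: power_add)
  qed
  have finite_C: "finite (?C D)" for D
    using V finite_subset[OF S V] by (simp add: finite_covering_edges)
  have "(\<Sum>E\<in>{E \<in> dags_on V. sources_on V E = S}. q ^ card E * G (card (second_layer V E)))
      = (\<Sum>(D, B)\<in>(SIGMA D:dags_on ?R. ?C D). q ^ card (D \<union> B) * G (card (second_layer V (D \<union> B))))"
    using sum.reindex_bij_betw[OF bij_betw_dags_with_sources[OF S],
        of "\<lambda>E. q ^ card E * G (card (second_layer V E))"]
    by (simp add: case_prod_unfold)
  also have "\<dots> = (\<Sum>(D, B)\<in>(SIGMA D:dags_on ?R. ?C D). q ^ card D * G (card (sources_on ?R D)) * q ^ card B)"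
    by (rule sum.cong) (auto simp: weight)
  also have "\<dots> = (\<Sum>D\<in>dags_on ?R. \<Sum>B\<in>?C D. q ^ card D * G (card (sources_on ?R D)) * q ^ card B)"
    using V finite_C by (subst sum.Sigma) (auto intro: finite_dags_on)
  finally show ?thesis
    by (simp add: sum_distrib_left)
qed

lemma weighted_Chebyshev_sum_upper:
  fixes w f g :: "'a \<Rightarrow> 'b::linordered_idom"
  assumes "\<And>i. i \<in> I \<Longrightarrow> 0 \<le> w i"
    and "\<And>i j. i \<in> I \<Longrightarrow> j \<in> I \<Longrightarrow> (f i - f j) * (g i - g j) \<le> 0"
  shows "(\<Sum>i\<in>I. w i) * (\<Sum>i\<in>I. w i * f i * g i) \<le> (\<Sum>i\<in>I. w i * f i) * (\<Sum>i\<in>I. w i * g i)"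
proof -
  have pointwise: "w i * w j * ((f i - f j) * (g i - g j))
      = w i * f i * g i * w j + w i * (w j * f j * g j) - w i * f i * (w j * g j) - w i * g i * (w j * f j)"
    for i j
    by (simp add: algebra_simps)
  have "(\<Sum>i\<in>I. \<Sum>j\<in>I. w i * w j * ((f i - f j) * (g i - g j)))
      = (\<Sum>i\<in>I. \<Sum>j\<in>I. w i * f i * g i * w j) + (\<Sum>i\<in>I. \<Sum>j\<in>I. w i * (w j * f j * g j))
        - (\<Sum>i\<in>I. \<Sum>j\<in>I. w i * f i * (w j * g j)) - (\<Sum>i\<in>I. \<Sum>j\<in>I. w i * g i * (w j * f j))"
    by (simp only: pointwise sum_subtractf sum.distrib)
  also have "\<dots> = 2 * ((\<Sum>i\<in>I. w i) * (\<Sum>i\<in>I. w i * f i * g i) - (\<Sum>i\<in>I. w i * f i) * (\<Sum>i\<in>I. w i * g i))"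
    by (simp only: sum_product[symmetric]) (simp add: algebra_simps)
  finally have identity: "(\<Sum>i\<in>I. \<Sum>j\<in>I. w i * w j * ((f i - f j) * (g i - g j)))
      = 2 * ((\<Sum>i\<in>I. w i) * (\<Sum>i\<in>I. w i * f i * g i) - (\<Sum>i\<in>I. w i * f i) * (\<Sum>i\<in>I. w i * g i))" .
  have "(\<Sum>i\<in>I. \<Sum>j\<in>I. w i * w j * ((f i - f j) * (g i - g j))) \<le> 0"
    using assms by (intro sum_nonpos) (simp add: mult_nonneg_nonpos)
  then show ?thesis
    unfolding identity by (simp add: mult_le_0_iff)
qed

definition total_weight :: "real \<Rightarrow> 'a set \<Rightarrow> real" where
  "total_weight q V = (\<Sum>E\<in>dags_on V. q ^ card E)"

definition source_weight :: "real \<Rightarrow> 'a set \<Rightarrow> real" where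
  "source_weight q V = (\<Sum>E\<in>dags_on V. q ^ card E * real (card (sources_on V E)))"

lemma total_weight_ge_1:
  assumes "finite V" "0 \<le> q"
  shows "1 \<le> total_weight q V"
proof -
  have "q ^ card ({} :: ('a \<times> 'a) set) \<le> (\<Sum>E\<in>dags_on V. q ^ card E)"
    using assms by (intro member_le_sum) (auto simp: finite_dags_on empty_in_dags_on)
  then show ?thesis
    by (simp add: total_weight_def)
qed

lemma mult_power_diff_antimono:
  fixes a b :: "'a::linordered_semidom"
  assumes "0 \<le> b" "b \<le> a" "k \<le> l" "l \<le> m"
  shows "a ^ (m - l) * b ^ l \<le> a ^ (m - k) * b ^ k"
proof -
  have "a ^ (m - l) * b ^ l = a ^ (m - l) * b ^ (l - k) * b ^ k"
    using assms(3) by (simp add: mult.assoc flip: power_add)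
  also have "\<dots> \<le> a ^ (m - l) * a ^ (l - k) * b ^ k"
    using assms(1,2) by (intro mult_right_mono mult_left_mono power_mono) (auto intro: order_trans)
  also have "\<dots> = a ^ (m - k) * b ^ k"
    using assms(3,4) by (simp flip: power_add)
  finally show ?thesis .
qed

text \<open>The number of sources of the DAG on \<open>V - S\<close> and the weight of the edges that can be
  added from \<open>S\<close> are oppositely ordered; Chebyshev's sum inequality turns this negative
  correlation into the bound.\<close>
lemma second_layer_weight_with_sources_le:
  fixes q K :: real
  assumes V: "finite V" and S: "S \<subseteq> V" and q: "0 \<le> q"
    and hyp: "source_weight q (V - S) \<le> K * total_weight q (V - S)"
  shows "(\<Sum>E\<in>{E \<in> dags_on V. sources_on V E = S}. q ^ card E * real (card (second_layer V E)))
       \<le> K * (\<Sum>E\<in>{E \<in> dags_on V. sources_on V E = S}. q ^ card E)"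
proof -
  let ?R = "V - S"
  define a where "a = (1 + q) ^ card S"
  define c where "c k = a ^ (card ?R - k) * (a - 1) ^ k" for k
  let ?w = "\<lambda>D. q ^ card D" and ?f = "\<lambda>D. real (card (sources_on ?R D))"
  let ?g = "\<lambda>D. c (card (sources_on ?R D))"
  have "finite ?R"
    using V by simp
  have a: "1 \<le> a"
    using q by (simp add: a_def one_le_power)
  have cover: "(\<Sum>B\<in>covering_edges S ?R (sources_on ?R D). q ^ card B) = ?g D" for D
    unfolding c_def a_def
    by (rule sum_covering_edges) (use finite_subset[OF S V] V in \<open>auto simp: sources_on_def\<close>)
  have "total_weight q ?R * (\<Sum>D\<in>dags_on ?R. ?w D * ?f D * ?g D)
      \<le> source_weight q ?R * (\<Sum>D\<in>dags_on ?R. ?w D * ?g D)"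
    unfolding total_weight_def source_weight_def
  proof (rule weighted_Chebyshev_sum_upper)
    fix D D' assume "D \<in> dags_on ?R" "D' \<in> dags_on ?R"
    have "card (sources_on ?R D) \<le> card ?R" "card (sources_on ?R D') \<le> card ?R"
      using \<open>finite ?R\<close> by (auto intro!: card_mono simp: sources_on_def)
    then have "?f D \<le> ?f D' \<Longrightarrow> ?g D' \<le> ?g D" "?f D' \<le> ?f D \<Longrightarrow> ?g D \<le> ?g D'"
      using a unfolding c_def by (auto intro!: mult_power_diff_antimono)
    then show "(?f D - ?f D') * (?g D - ?g D') \<le> 0"
      by (cases "?f D \<le> ?f D'") (auto simp: mult_le_0_iff)
  qed (use q in simp)
  also have "\<dots> \<le> K * total_weight q ?R * (\<Sum>D\<in>dags_on ?R. ?w D * ?g D)"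
    using hyp a q by (intro mult_right_mono sum_nonneg) (auto simp: c_def)
  finally have "(\<Sum>D\<in>dags_on ?R. ?w D * ?f D * ?g D) \<le> K * (\<Sum>D\<in>dags_on ?R. ?w D * ?g D)"
    using total_weight_ge_1[OF \<open>finite ?R\<close> q] by (simp add: mult.commute mult.left_commute)
  then show ?thesis
    using sum_dags_with_sources[OF V S, of q real] sum_dags_with_sources[OF V S, of q "\<lambda>_. 1"]
    by (simp add: cover)
qed

lemma second_layer_no_sources: "sources_on V E = {} \<Longrightarrow> second_layer V E = {}"
  by (auto simp: second_layer_def sources_on_def)

lemma second_layer_weight_le:
  fixes q K :: real
  assumes V: "finite V" and q: "0 \<le> q" and K: "0 \<le> K"
    and IH: "\<And>R. R \<subset> V \<Longrightarrow> source_weight q R \<le> K * total_weight q R"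
  shows "(\<Sum>E\<in>{E \<in> dags_on V. card (sources_on V E) \<in> J}. q ^ card E * real (card (second_layer V E)))
       \<le> K * (\<Sum>E\<in>{E \<in> dags_on V. card (sources_on V E) \<in> J}. q ^ card E)"
proof -
  define DS where "DS = {E \<in> dags_on V. card (sources_on V E) \<in> J}"
  define with_sources where "with_sources S = {E \<in> DS. sources_on V E = S}" for S
  have "finite DS"
    using V by (simp add: DS_def finite_dags_on)
  have sources_in_Pow: "sources_on V ` DS \<subseteq> Pow V"
    by (auto simp: sources_on_def)
  have "(\<Sum>E\<in>with_sources S. q ^ card E * real (card (second_layer V E)))
      \<le> K * (\<Sum>E\<in>with_sources S. q ^ card E)" if "S \<subseteq> V" for S
  proof (cases "S = {} \<or> card S \<notin> J")
    case True
    then have "(\<Sum>E\<in>with_sources S. q ^ card E * real (card (second_layer V E))) = 0"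
      by (auto simp: with_sources_def DS_def second_layer_no_sources intro!: sum.neutral)
    then show ?thesis
      using K q by (simp add: sum_nonneg)
  next
    case False
    then have "with_sources S = {E \<in> dags_on V. sources_on V E = S}"
      by (auto simp: with_sources_def DS_def)
    moreover have "V - S \<subset> V"
      using False that by blast
    ultimately show ?thesis
      using second_layer_weight_with_sources_le[OF V that q IH] by simp
  qed
  moreover have group: "(\<Sum>S\<in>Pow V. \<Sum>E\<in>with_sources S. h E) = (\<Sum>E\<in>DS. h E)" for h
    using sum.group[OF \<open>finite DS\<close> _ sources_in_Pow, of h] V by (simp add: with_sources_def)
  ultimately have "(\<Sum>E\<in>DS. q ^ card E * real (card (second_layer V E)))
      \<le> (\<Sum>S\<in>Pow V. K * (\<Sum>E\<in>with_sources S. q ^ card E))"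
    unfolding group[symmetric] by (intro sum_mono) simp
  also have "\<dots> = K * (\<Sum>E\<in>DS. q ^ card E)"
    by (simp only: group flip: sum_distrib_left)
  finally show ?thesis
    unfolding DS_def .
qed

lemma dag_join_sources_into_source:
  assumes V: "finite V" and E: "E \<in> dags_on V" and t: "t \<in> sources_on V E"
    and F: "F \<subseteq> (sources_on V E - {t}) \<times> {t}" "F \<noteq> {}"
  shows "E \<union> F \<in> dags_on V" "Suc (card (sources_on V (E \<union> F))) = card (sources_on V E)"
    "t \<in> second_layer V (E \<union> F)" "card (E \<union> F) = card E + card F"
    "{e \<in> E \<union> F. snd e \<noteq> t} = E" "{e \<in> E \<union> F. snd e = t} = F"
proof -
  have E_sub: "E \<subseteq> V \<times> V" and "acyclic E"
    using E by (auto simp: dags_on_def)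
  have no_edge_into_t: "(u, t) \<notin> E" for u
    using t by (simp add: sources_on_def)
  have "finite (sources_on V E)"
    using V by (simp add: sources_on_def)
  have "acyclic (E \<union> F)"
    by (rule acyclic_Un_from_sources[OF \<open>acyclic E\<close>]) (use F(1) in \<open>auto simp: sources_on_def\<close>)
  then show "E \<union> F \<in> dags_on V"
    using E_sub F(1) t by (auto simp: dags_on_def sources_on_def)
  have sources: "sources_on V (E \<union> F) = sources_on V E - {t}"
    using F by (auto simp: sources_on_def)
  then show "Suc (card (sources_on V (E \<union> F))) = card (sources_on V E)"
    using card_Suc_Diff1[OF \<open>finite (sources_on V E)\<close> t] by simp
  show "t \<in> second_layer V (E \<union> F)"
    using F(1) t no_edge_into_t unfolding second_layer_def sources by (auto simp: sources_on_def)
  have "finite E" "finite F"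
    using E_sub F(1) V \<open>finite (sources_on V E)\<close> by (auto intro: finite_subset)
  then show "card (E \<union> F) = card E + card F"
    using F(1) no_edge_into_t by (intro card_Un_disjoint) auto
  show "{e \<in> E \<union> F. snd e \<noteq> t} = E" "{e \<in> E \<union> F. snd e = t} = F"
    using F(1) no_edge_into_t by auto
qed

definition source_excess :: "real \<Rightarrow> nat \<Rightarrow> real" where
  "source_excess q k = real k * ((1 + q) ^ (k - 1) - 1)"

lemma source_excess_eq_sum:
  assumes "finite A"
  shows "source_excess q (card A) = (\<Sum>t\<in>A. \<Sum>F\<in>Pow ((A - {t}) \<times> {t}) - {{}}. q ^ card F)"
proof -
  have "(\<Sum>F\<in>Pow ((A - {t}) \<times> {t}) - {{}}. q ^ card F) = (1 + q) ^ (card A - 1) - 1"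
    if "t \<in> A" for t
    using that assms by (simp add: sum_power_card_Pow_nonempty card_cartesian_product)
  then show ?thesis
    by (simp add: source_excess_def)
qed

text \<open>Joining a nonempty set of the other sources to a source \<open>t\<close> makes \<open>t\<close> a second-layer
  vertex, and the original DAG, \<open>t\<close> and the new edges can be read off the result; summing the
  weights of the new edges over all choices gives the excess.\<close>
lemma sum_source_excess_le_second_layer:
  fixes q :: real
  assumes V: "finite V" and q: "0 \<le> q"
  shows "(\<Sum>E\<in>{E \<in> dags_on V. card (sources_on V E) \<in> J}. q ^ card E * source_excess q (card (sources_on V E)))
       \<le> (\<Sum>E\<in>{E \<in> dags_on V. Suc (card (sources_on V E)) \<in> J}. q ^ card E * real (card (second_layer V E)))"
proof -
  define DS where "DS = {E \<in> dags_on V. card (sources_on V E) \<in> J}"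
  define DS' where "DS' = {E \<in> dags_on V. Suc (card (sources_on V E)) \<in> J}"
  define joins where "joins E t = Pow ((sources_on V E - {t}) \<times> {t}) - {{}}" for E t
  have finite_sources: "finite (sources_on V E)" for E
    using V by (simp add: sources_on_def)
  have "finite DS" "finite DS'"
    using V by (simp_all add: DS_def DS'_def finite_dags_on)
  have finite_joins: "finite (joins E t)" for E t
    using finite_sources by (simp add: joins_def)
  have "(\<Sum>E\<in>DS. q ^ card E * source_excess q (card (sources_on V E)))
      = (\<Sum>E\<in>DS. \<Sum>t\<in>sources_on V E. \<Sum>F\<in>joins E t. q ^ card E * q ^ card F)"
    using finite_sources by (simp add: source_excess_eq_sum joins_def sum_distrib_left)
  also have "\<dots> = (\<Sum>(E, t, F)\<in>(SIGMA E:DS. SIGMA t:sources_on V E. joins E t). q ^ card E * q ^ card F)"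
    using \<open>finite DS\<close> finite_sources finite_joins by (simp add: sum.Sigma)
  also have "\<dots> \<le> (\<Sum>(E', t)\<in>(SIGMA E':DS'. second_layer V E'). q ^ card E')"
  proof (rule sum_le_included[where i = "\<lambda>(E', t). ({e \<in> E'. snd e \<noteq> t}, t, {e \<in> E'. snd e = t})"])
    show "finite (SIGMA E:DS. SIGMA t:sources_on V E. joins E t)"
      using \<open>finite DS\<close> finite_sources finite_joins by blast
    show "finite (SIGMA E':DS'. second_layer V E')"
      using \<open>finite DS'\<close> V by (auto simp: second_layer_def)
    show "\<forall>y\<in>SIGMA E':DS'. second_layer V E'. 0 \<le> (case y of (E', t) \<Rightarrow> q ^ card E')"
      using q by auto
    show "\<forall>x\<in>SIGMA E:DS. SIGMA t:sources_on V E. joins E t. \<exists>y\<in>SIGMA E':DS'. second_layer V E'.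
        (case y of (E', t) \<Rightarrow> ({e \<in> E'. snd e \<noteq> t}, t, {e \<in> E'. snd e = t})) = x
        \<and> (case x of (E, t, F) \<Rightarrow> q ^ card E * q ^ card F) \<le> (case y of (E', t) \<Rightarrow> q ^ card E')"
    proof clarify
      fix E t F assume "E \<in> DS" "t \<in> sources_on V E" "F \<in> joins E t"
      then have "E \<in> dags_on V" "F \<subseteq> (sources_on V E - {t}) \<times> {t}" "F \<noteq> {}"
        by (auto simp: DS_def joins_def)
      note join = dag_join_sources_into_source[OF V this(1) \<open>t \<in> sources_on V E\<close> this(2,3)]
      show "\<exists>y\<in>SIGMA E':DS'. second_layer V E'.
          (case y of (E', t) \<Rightarrow> ({e \<in> E'. snd e \<noteq> t}, t, {e \<in> E'. snd e = t})) = (E, t, F)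
          \<and> q ^ card E * q ^ card F \<le> (case y of (E', t) \<Rightarrow> q ^ card E')"
        using join \<open>E \<in> DS\<close> by (intro bexI[of _ "(E \<union> F, t)"]) (simp_all add: DS_def DS'_def power_add)
    qed
  qed
  also have "\<dots> = (\<Sum>E'\<in>DS'. q ^ card E' * real (card (second_layer V E')))"
    using \<open>finite DS'\<close> V by (simp add: sum.Sigma[symmetric] second_layer_def mult.commute)
  finally show ?thesis
    unfolding DS_def DS'_def .
qed

lemma sum_source_excess_le:
  fixes q K :: real
  assumes V: "finite V" and q: "0 \<le> q" and K: "0 \<le> K"
    and IH: "\<And>R. R \<subset> V \<Longrightarrow> source_weight q R \<le> K * total_weight q R"
  shows "(\<Sum>E\<in>{E \<in> dags_on V. card (sources_on V E) \<in> J}. q ^ card E * source_excess q (card (sources_on V E)))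
       \<le> K * (\<Sum>E\<in>{E \<in> dags_on V. Suc (card (sources_on V E)) \<in> J}. q ^ card E)"
  using sum_source_excess_le_second_layer[OF V q, of J] second_layer_weight_le[OF V q K IH, of "{j. Suc j \<in> J}"]
  by simp

lemma source_excess_nonneg: "0 \<le> q \<Longrightarrow> 0 \<le> source_excess q k"
  by (simp add: source_excess_def one_le_power)

lemma source_excess_ge:
  assumes q: "0 \<le> q" and N: "3 \<le> (1 + q) ^ N" and k: "N < k"
  shows "2 * real k \<le> source_excess q k"
proof -
  have "(1 + q) ^ N \<le> (1 + q) ^ (k - 1)"
    using q k by (intro power_increasing) auto
  then have "real k * 2 \<le> real k * ((1 + q) ^ (k - 1) - 1)"
    using N by (intro mult_left_mono) auto
  then show ?thesis
    by (simp add: source_excess_def mult.commute)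
qed

lemma source_weight_le:
  assumes "finite V" and q: "0 \<le> q" and N: "3 \<le> (1 + q) ^ N"
  shows "source_weight q V \<le> 2 * real N * total_weight q V"
  using assms(1)
proof (induction V rule: finite_psubset_induct)
  case (psubset V)
  have "2 * real k - 2 * real N \<le> source_excess q k" for k
    using source_excess_ge[OF q N, of k] source_excess_nonneg[OF q, of k] by (cases "N < k") auto
  then have "(\<Sum>E\<in>dags_on V. q ^ card E * (2 * real (card (sources_on V E)) - 2 * real N))
      \<le> (\<Sum>E\<in>dags_on V. q ^ card E * source_excess q (card (sources_on V E)))"
    using q by (intro sum_mono mult_left_mono) auto
  also have "\<dots> \<le> 2 * real N * total_weight q V"
    using sum_source_excess_le[OF psubset.hyps q _ psubset.IH, of UNIV]
    by (simp add: total_weight_def)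
  also have "(\<Sum>E\<in>dags_on V. q ^ card E * (2 * real (card (sources_on V E)) - 2 * real N))
      = 2 * source_weight q V - 2 * real N * total_weight q V"
    by (simp add: source_weight_def total_weight_def right_diff_distrib sum_subtractf sum_distrib_left mult_ac)
  finally show ?case
    by simp
qed

definition tail_weight :: "real \<Rightarrow> 'a set \<Rightarrow> nat \<Rightarrow> real" where
  "tail_weight q V s = (\<Sum>E\<in>{E \<in> dags_on V. s \<le> card (sources_on V E)}. q ^ card E)"

lemma tail_weight_halves:
  assumes V: "finite V" and q: "0 \<le> q" and N: "3 \<le> (1 + q) ^ N" and s: "2 * N < s"
  shows "2 * tail_weight q V s \<le> tail_weight q V (s - 1)"
proof -
  have "0 < N"
    using N by (cases N) auto
  have excess: "4 * real N \<le> source_excess q k" if "s \<le> k" for k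
    using source_excess_ge[OF q N, of k] that s by simp
  have IH: "source_weight q R \<le> 2 * real N * total_weight q R" if "R \<subset> V" for R
    using source_weight_le[OF _ q N] V that by (meson finite_subset psubset_imp_subset)
  have "2 * real N * (2 * tail_weight q V s)
      = (\<Sum>E\<in>{E \<in> dags_on V. s \<le> card (sources_on V E)}. q ^ card E * (4 * real N))"
    by (simp add: tail_weight_def sum_distrib_left sum_distrib_right mult_ac)
  also have "\<dots> \<le> (\<Sum>E\<in>{E \<in> dags_on V. s \<le> card (sources_on V E)}.
                      q ^ card E * source_excess q (card (sources_on V E)))"
    using q excess by (intro sum_mono mult_left_mono) auto
  also have "\<dots> \<le> 2 * real N * tail_weight q V (s - 1)"
    using sum_source_excess_le[OF V q _ IH, of "{j. s \<le> j}"] s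
    by (simp add: tail_weight_def le_diff_conv)
  finally show ?thesis
    using \<open>0 < N\<close> by simp
qed

lemma tail_weight_le_total_weight:
  assumes "finite V" "0 \<le> q"
  shows "tail_weight q V s \<le> total_weight q V"
  unfolding tail_weight_def total_weight_def
  using assms by (intro sum_mono2) (auto simp: finite_dags_on)

lemma tail_weight_geometric:
  assumes V: "finite V" and q: "0 \<le> q" and N: "3 \<le> (1 + q) ^ N"
  shows "tail_weight q V (2 * N + i) \<le> (1 / 2) ^ i * total_weight q V"
proof (induction i)
  case 0
  show ?case
    using tail_weight_le_total_weight[OF V q] by simp
next
  case (Suc i)
  have "2 * tail_weight q V (2 * N + Suc i) \<le> tail_weight q V (2 * N + i)"
    using tail_weight_halves[OF V q N, of "2 * N + Suc i"] by simp
  with Suc.IH show ?case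
    by simp
qed

lemma odds_power_ge_3:
  fixes p :: real
  assumes p: "0 < p" "p < 1"
  shows "3 \<le> (1 + p / (1 - p)) ^ nat \<lceil>5 / (4 * p)\<rceil>"
proof -
  define N where "N = nat \<lceil>5 / (4 * p)\<rceil>"
  have "5 / (4 * p) \<le> real N"
    unfolding N_def by (rule real_nat_ceiling_ge)
  then have "p * (5 / (4 * p)) \<le> p * real N"
    using p by (intro mult_left_mono) auto
  then have "5 / 4 \<le> p * real N"
    using p by simp
  have "(1 - p) ^ N \<le> exp (- p) ^ N"
    using p exp_ge_add_one_self[of "- p"] by (intro power_mono) auto
  also have "\<dots> = exp (- (p * real N))"
    by (simp add: exp_of_nat_mult[symmetric] mult.commute)
  also have "\<dots> \<le> exp (- (5 / 4))"
    using \<open>5 / 4 \<le> p * real N\<close> by simp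
  also have "\<dots> \<le> 1 / 3"
  proof -
    have "1 + 5 / 4 + (5 / 4) ^ 2 / 2 \<le> exp (5 / 4 :: real)"
      by (rule exp_lower_Taylor_quadratic) simp
    then show ?thesis
      by (simp add: exp_minus field_simps power2_eq_square)
  qed
  finally have "(1 - p) ^ N \<le> 1 / 3" .
  moreover have "1 + p / (1 - p) = 1 / (1 - p)"
    using p by (simp add: field_simps)
  ultimately show ?thesis
    using p by (simp add: N_def power_divide field_simps)
qed

lemma half_power_le:
  fixes p :: real
  assumes "0 < p" "1 / p \<le> real i"
  shows "(1 / 2) ^ i \<le> p"
proof -
  have "0 < i"
    using assms by (cases "i = 0") auto
  have "real i < 2 ^ i"
    using less_exp[of i] by (metis of_nat_less_iff of_nat_numeral of_nat_power)
  then have "(1 / 2) ^ i \<le> 1 / real i"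
    using \<open>0 < i\<close> by (simp add: power_one_over field_simps)
  also have "\<dots> \<le> p"
    using assms \<open>0 < i\<close> by (simp add: field_simps)
  finally show ?thesis .
qed

lemma tail_weight_le:
  fixes p :: real
  assumes V: "finite V" and p: "0 < p" "p \<le> 1 / 2" and s: "5 / p < real s"
  shows "tail_weight (p / (1 - p)) V s \<le> p * total_weight (p / (1 - p)) V"
proof -
  define q where "q = p / (1 - p)"
  define N where "N = nat \<lceil>5 / (4 * p)\<rceil>"
  have q: "0 \<le> q"
    using p by (simp add: q_def)
  have N: "3 \<le> (1 + q) ^ N"
    unfolding q_def N_def using p by (intro odds_power_ge_3) auto
  have "real N < 5 / (4 * p) + 1"
    using p by (simp add: N_def) linarith
  moreover have "2 \<le> 1 / p"
    using p by (simp add: field_simps)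
  ultimately have "real (2 * N) + 1 / p \<le> real s"
    using s by (simp add: field_simps)
  moreover have "0 < 1 / p"
    using p by simp
  ultimately have "real (2 * N) \<le> real s"
    by linarith
  then have "2 * N \<le> s"
    by (simp only: of_nat_le_iff)
  with \<open>real (2 * N) + 1 / p \<le> real s\<close>
  have i: "s = 2 * N + (s - 2 * N)" "1 / p \<le> real (s - 2 * N)"
    by (simp_all add: of_nat_diff)
  have "tail_weight q V s \<le> (1 / 2) ^ (s - 2 * N) * total_weight q V"
    using tail_weight_geometric[OF V q N, of "s - 2 * N"] i(1) by simp
  also have "\<dots> \<le> p * total_weight q V"
    using half_power_le[OF p(1) i(2)] total_weight_ge_1[OF V q] by (intro mult_right_mono) auto
  finally show ?thesis
    unfolding q_def .
qed

lemma dag_prob_eq: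
  "dag_prob n p P = (\<Sum>E\<in>{E \<in> dags_on {1..n}. P E}. (p / (1 - p)) ^ card E) / total_weight (p / (1 - p)) {1..n}"
  by (simp add: dag_prob_def dags_def dags_on_def dag_weight_def total_weight_def)

lemma sources_eq_sources_on: "sources n E = sources_on {1..n} E"
  by (simp add: sources_def sources_on_def)

lemma of_nat_le_iff_le_nat_floor:
  fixes x :: real
  assumes "0 \<le> x"
  shows "real k \<le> x \<longleftrightarrow> k \<le> nat \<lfloor>x\<rfloor>"
proof
  show "k \<le> nat \<lfloor>x\<rfloor>" if "real k \<le> x"
    using that by (rule le_nat_floor)
  show "real k \<le> x" if "k \<le> nat \<lfloor>x\<rfloor>"
  proof -
    have "real k \<le> real (nat \<lfloor>x\<rfloor>)"
      using that by (simp only: of_nat_le_iff)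
    also have "\<dots> \<le> x"
      using assms by (rule of_nat_floor)
    finally show ?thesis .
  qed
qed

lemma dag_prob_few_sources:
  fixes p :: real
  assumes p: "0 < p" "p \<le> 1 / 2"
  shows "1 - p \<le> dag_prob n p (\<lambda>E. real (card (sources n E)) \<le> 5 / p)"
    and "dag_prob n p (\<lambda>E. real (card (sources n E)) \<le> 5 / p) \<le> 1"
proof -
  define q where "q = p / (1 - p)"
  define V where "V = {1..n}"
  define s where "s = Suc (nat \<lfloor>5 / p\<rfloor>)"
  define W where "W = (\<Sum>E\<in>{E \<in> dags_on V. \<not> s \<le> card (sources_on V E)}. q ^ card E)"
  have "finite V" and q: "0 \<le> q"
    using p by (simp_all add: V_def q_def)
  have few_iff: "real k \<le> 5 / p \<longleftrightarrow> \<not> s \<le> k" for k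
    using p of_nat_le_iff_le_nat_floor[of "5 / p" k] by (auto simp: s_def)
  have prob: "dag_prob n p (\<lambda>E. real (card (sources n E)) \<le> 5 / p) = W / total_weight q V"
    by (simp add: dag_prob_eq sources_eq_sources_on few_iff W_def q_def V_def)
  have split: "total_weight q V = W + tail_weight q V s"
    unfolding total_weight_def W_def tail_weight_def
    by (subst sum.union_disjoint[symmetric]) (auto simp: \<open>finite V\<close> finite_dags_on intro: sum.cong)
  have "5 / p < real s"
    using p by (simp add: s_def) linarith
  then have "tail_weight q V s \<le> p * total_weight q V"
    unfolding q_def by (rule tail_weight_le[OF \<open>finite V\<close> p])
  then show "1 - p \<le> dag_prob n p (\<lambda>E. real (card (sources n E)) \<le> 5 / p)"
    using split total_weight_ge_1[OF \<open>finite V\<close> q] by (simp add: prob field_simps)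
  have "0 \<le> tail_weight q V s"
    using q by (simp add: tail_weight_def sum_nonneg)
  then show "dag_prob n p (\<lambda>E. real (card (sources n E)) \<le> 5 / p) \<le> 1"
    using split total_weight_ge_1[OF \<open>finite V\<close> q] by (simp add: prob)
qed

lemma tendsto_0_if_mult_ln_tendsto_0:
  fixes p :: "nat \<Rightarrow> real"
  assumes nonneg: "\<And>n. 0 \<le> p n" and lim: "(\<lambda>n. p n * ln (real n)) \<longlonglongrightarrow> 0"
  shows "p \<longlonglongrightarrow> 0"
proof (rule tendsto_sandwich[OF _ _ tendsto_const lim])
  show "eventually (\<lambda>n. 0 \<le> p n) sequentially"
    using nonneg by simp
  show "eventually (\<lambda>n. p n \<le> p n * ln (real n)) sequentially"
  proof (rule eventually_sequentiallyI[of 3])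
    fix n :: nat assume "3 \<le> n"
    then have "1 \<le> ln (real n)"
      using exp_le by (subst ln_ge_iff) auto
    then show "p n \<le> p n * ln (real n)"
      using nonneg[of n] by (simp add: mult_le_cancel_left1)
  qed
qed

theorem mainTheorem6:
  fixes p :: "nat \<Rightarrow> real"
  assumes "\<And>n. 0 < p n \<and> p n < 1"
    and "(\<lambda>n. p n * ln (real n)) \<longlonglongrightarrow> 0"
  shows "(\<lambda>n. dag_prob n (p n) (\<lambda>E. real (card (sources n E)) \<le> 5 / p n)) \<longlonglongrightarrow> 1"
proof -
  have "0 \<le> p n" for n
    using assms(1)[of n] by simp
  then have "p \<longlonglongrightarrow> 0"
    using assms(2) by (rule tendsto_0_if_mult_ln_tendsto_0)
  then have small: "eventually (\<lambda>n. p n < 1 / 2) sequentially"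
    by (rule order_tendstoD(2)) simp
  have few: "1 - p n \<le> dag_prob n (p n) (\<lambda>E. real (card (sources n E)) \<le> 5 / p n)"
    "dag_prob n (p n) (\<lambda>E. real (card (sources n E)) \<le> 5 / p n) \<le> 1" if "p n < 1 / 2" for n
    using dag_prob_few_sources[of "p n" n] assms(1)[of n] that by simp_all
  have "(\<lambda>n. 1 - p n) \<longlonglongrightarrow> 1"
    using tendsto_diff[OF tendsto_const \<open>p \<longlonglongrightarrow> 0\<close>, of 1] by simp
  with eventually_mono[OF small few(1)] eventually_mono[OF small few(2)] show ?thesis
    by (rule tendsto_sandwich[OF _ _ _ tendsto_const])
qed

end
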